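(* Let $\beta\in[0,1)$ and let $U:\mathbb{R}^d\to\mathbb{R}$ be twice continuously differentiable with $\nabla U(0)=0$ and $\sup_x\|\mathrm{D}^2U(x)\|\le\mathtt{L}$. Assume there exist $\mathtt{m}_\beta>0$, $\mathtt{L}_\beta,\mathtt{K}_\beta\ge0$ with $\frac{\mathtt{L}_\beta}{1+\|x\|^{3\beta/4}}\ge\mathrm{D}^2U(x)[y,y]\ge\frac{\mathtt{m}_\beta}{1+\|x\|^\beta}$ for all $\|x\|\ge\mathtt{K}_\beta$, $\|y\|=1$. Let $\bar\gamma\le(4\mathtt{L})^{-1}\wedge(\mathtt{m}_\beta^3/(2^4\mathtt{L}_\beta^4))$, $\epsilon=(\mathtt{m}_\beta^3/2^4)\{2^{3/2}\mathtt{L}_\beta^2+2^{-1/2}\bar\gamma^{1/2}\mathtt{L}_\beta^3\}^{-1}$ and $$C_{2,\bar\gamma,\beta}=2\mathtt{L}+2^{3/2}\mathtt{L}_\beta^2\epsilon^{-1}+(\bar\gamma/2)\mathtt{L}^2+2^{-1/2}\bar\gamma^{3/2}\mathtt{L}_\beta^3\epsilon^{-1}.$$ Let $\tilde{\mathtt{K}}_\beta=[4\mathtt{K}_\beta(1+\mathtt{L}/\mathtt{m}_\beta)]\vee[4\mathtt{K}_\beta(1+\mathtt{L}/\mathtt{m}_\beta)]^{1/(1-\beta)}$ and $\bar{\mathtt{K}}_\beta=[2\mathtt{L}\mathtt{K}_\beta/\mathtt{L}_\beta]\vee[2\mathtt{L}\mathtt{K}_\beta/\mathtt{L}_\beta]^{1/(1-3\beta/4)}$.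 Then for all $\gamma\in(0,\bar\gamma]$ and $x,z\in\mathbb{R}^d$ with $\|x\|\ge\max(2\mathtt{K}_\beta,\tilde{\mathtt{K}}_\beta,\bar{\mathtt{K}}_\beta)$ and $\|z\|\le\|x\|/(4\sqrt{2\gamma})$, $$\tau_\gamma(x,z)\le C_{2,\bar\gamma,\beta}\gamma\|z\|^2.$$
   Context: For $\gamma>0$ and $x,z\in\mathbb{R}^d$, $\tau_\gamma(x,z)=U(x-\gamma\nabla U(x)+\sqrt{2\gamma}z)-U(x)+\frac12\big\{\|z-(\gamma/2)^{1/2}[\nabla U(x)+\nabla U(x-\gamma\nabla U(x)+\sqrt{2\gamma}z)]\|^2-\|z\|^2\big\}$. *)

theory Defs
  imports "HOL-Analysis.Analysis"
begin

text \<open>Real power t^a for t \<ge> 0 with the usual convention 0^0 = 1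
  (Isabelle's powr has 0 powr a = 0 for all a).\<close>
definition rpow :: "real \<Rightarrow> real \<Rightarrow> real" where
  "rpow t a = (if t = 0 then (if a = 0 then 1 else 0) else t powr a)"

definition tau :: "('a::euclidean_space \<Rightarrow> real) \<Rightarrow> ('a \<Rightarrow> 'a) \<Rightarrow> real \<Rightarrow> 'a \<Rightarrow> 'a \<Rightarrow> real" where
  "tau U G \<gamma> x z =
     (let y = x - \<gamma> *\<^sub>R G x + sqrt (2 * \<gamma>) *\<^sub>R z in
      U y - U x + (1/2) * ((norm (z - sqrt (\<gamma> / 2) *\<^sub>R (G x + G y)))\<^sup>2 - (norm z)\<^sup>2))"

definition eps_const :: "real \<Rightarrow> real \<Rightarrow> real \<Rightarrow> real" where
  "eps_const m\<^sub>\<beta> L\<^sub>\<beta> \<gamma>bar =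
     (m\<^sub>\<beta> ^ 3 / 2 ^ 4) / (2 powr (3/2) * L\<^sub>\<beta>\<^sup>2 + 2 powr (-1/2) * sqrt \<gamma>bar * L\<^sub>\<beta> ^ 3)"

definition C2_const :: "real \<Rightarrow> real \<Rightarrow> real \<Rightarrow> real \<Rightarrow> real" where
  "C2_const L m\<^sub>\<beta> L\<^sub>\<beta> \<gamma>bar =
     (let \<epsilon> = eps_const m\<^sub>\<beta> L\<^sub>\<beta> \<gamma>bar in
      2 * L + 2 powr (3/2) * L\<^sub>\<beta>\<^sup>2 / \<epsilon> + (\<gamma>bar / 2) * L\<^sup>2
        + 2 powr (-1/2) * \<gamma>bar powr (3/2) * L\<^sub>\<beta> ^ 3 / \<epsilon>)"

end

theory Submission
  imports Defs
begin

text \<open>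
  Write \<open>y = x - \<gamma> \<nabla>U(x) + sqrt(2\<gamma>) z\<close> and \<open>d = |y - x|\<close>. Expanding the square in \<open>\<tau>\<close> gives
  \<open>\<tau> = [U(y) - U(x) - \<nabla>U(y) \<bullet> (y - x)] + sqrt(\<gamma>/2) (\<nabla>U(y) - \<nabla>U(x)) \<bullet> z + (\<gamma>/4) |\<nabla>U(y) - \<nabla>U(x)|\<^sup>2\<close>.
  Since \<open>|\<nabla>U(x)| \<le> L |x|\<close> and \<open>\<gamma> L \<le> 1/4\<close>, we have \<open>d \<le> |x|/2\<close>, so the segment from \<open>x\<close> to \<open>y\<close>
  lies in the annulus \<open>|x|/2 \<le> |p| \<le> 3|x|/2\<close>, where the curvature hypothesis gives
  \<open>a \<le> D\<^sup>2U \<le> b\<close> with \<open>a = m\<^sub>\<beta> / (1 + (3|x|/2)^\<beta>)\<close> and \<open>b = L\<^sub>\<beta> / (1 + (|x|/2)^(3\<beta>/4))\<close>.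
  Strong convexity bounds the bracket by \<open>-a d\<^sup>2/2\<close>, and the gradient increment is at most \<open>b d\<close>
  (this uses the symmetry of \<open>D\<^sup>2U\<close>), so \<open>\<tau>\<close> is bounded by a concave quadratic in \<open>d\<close> whose
  maximum is at most \<open>\<gamma> b\<^sup>2 |z|\<^sup>2 / (3a)\<close> as soon as \<open>2 \<gamma> b\<^sup>2 \<le> a\<close>.

  The two curvature bounds at the single radius \<open>\<rho> = |x|/2\<close> are compatible only if
  \<open>m\<^sub>\<beta> (1 + P\<^sup>3) \<le> L\<^sub>\<beta> (1 + P\<^sup>4)\<close> with \<open>P = \<rho>^(\<beta>/4)\<close>. This forces \<open>b\<^sup>2 / a \<le> 8 L\<^sub>\<beta>\<^sup>4 / m\<^sub>\<beta>\<^sup>3\<close>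
  uniformly in \<open>x\<close>, which yields \<open>2 \<gamma> b\<^sup>2 \<le> a\<close> for \<open>\<gamma> \<le> m\<^sub>\<beta>\<^sup>3 / (16 L\<^sub>\<beta>\<^sup>4)\<close> and the bound
  \<open>\<tau> \<le> (8 L\<^sub>\<beta>\<^sup>4 / (3 m\<^sub>\<beta>\<^sup>3)) \<gamma> |z|\<^sup>2\<close>, whose constant is dominated by \<open>C\<^sub>2\<close>.
\<close>

section \<open>Calculus along segments\<close>

lemma line_point_in_closed_segment:
  "0 \<le> t \<Longrightarrow> t \<le> 1 \<Longrightarrow> x + t *\<^sub>R (y - x) \<in> closed_segment x y"
  by (auto simp: in_segment algebra_simps intro!: exI[of _ t])

lemma has_real_derivative_along_line:
  fixes U :: "'a::real_inner \<Rightarrow> real"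
  assumes grad: "\<And>p. (U has_derivative (\<lambda>h. G p \<bullet> h)) (at p)"
  shows "((\<lambda>t. U (x + t *\<^sub>R d)) has_real_derivative G (x + t *\<^sub>R d) \<bullet> d) (at t)"
proof -
  have "((\<lambda>t. x + t *\<^sub>R d) has_derivative (\<lambda>h. h *\<^sub>R d)) (at t)"
    by (auto intro!: derivative_eq_intros)
  from has_derivative_compose[OF this grad]
  show ?thesis
    unfolding has_field_derivative_def o_def by (rule has_derivative_eq_rhs) (auto simp: fun_eq_iff)
qed

lemma inner_has_real_derivative_along_line:
  fixes G :: "'a::real_inner \<Rightarrow> 'a"
  assumes hess: "\<And>p. (G has_derivative blinfun_apply (H p)) (at p)"
  shows "((\<lambda>t. G (x + t *\<^sub>R d) \<bullet> w) has_real_derivative H (x + t *\<^sub>R d) d \<bullet> w) (at t)"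
proof -
  have "((\<lambda>t. x + t *\<^sub>R d) has_derivative (\<lambda>h. h *\<^sub>R d)) (at t)"
    by (auto intro!: derivative_eq_intros)
  from has_derivative_compose[OF this hess]
  have "((\<lambda>t. G (x + t *\<^sub>R d) \<bullet> w) has_derivative (\<lambda>h. H (x + t *\<^sub>R d) (h *\<^sub>R d) \<bullet> w)) (at t)"
    unfolding o_def by (auto intro!: derivative_eq_intros)
  then show ?thesis
    unfolding has_field_derivative_def
    by (rule has_derivative_eq_rhs) (auto simp: fun_eq_iff blinfun.scaleR_right)
qed

lemma taylor_remainder_le_of_second_derivative_ge:
  fixes f f' f'' :: "real \<Rightarrow> real"
  assumes f': "\<And>t. (f has_real_derivative f' t) (at t)"
    and f'': "\<And>t. (f' has_real_derivative f'' t) (at t)"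
    and ge: "\<And>t. 0 \<le> t \<Longrightarrow> t \<le> 1 \<Longrightarrow> \<kappa> \<le> f'' t"
  shows "f 1 - f 0 - f' 1 \<le> - \<kappa> / 2"
proof -
  define \<phi> where "\<phi> t = f' t - \<kappa> * t" for t
  have \<phi>_le: "\<phi> t \<le> \<phi> 1" if "0 \<le> t" "t \<le> 1" for t
  proof (cases "t = 1")
    case False
    have "(\<phi> has_real_derivative f'' s - \<kappa>) (at s)" for s
      unfolding \<phi>_def by (auto intro!: derivative_eq_intros f'')
    with MVT2[of t 1 \<phi>] False that obtain \<xi> where \<xi>: "t < \<xi>" "\<xi> < 1"
      and "\<phi> 1 - \<phi> t = (1 - t) * (f'' \<xi> - \<kappa>)" by force
    moreover have "0 \<le> (1 - t) * (f'' \<xi> - \<kappa>)"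
      using ge[of \<xi>] \<xi> that by (intro mult_nonneg_nonneg) auto
    ultimately show ?thesis by simp
  qed simp
  \<comment> \<open>\<open>\<psi>' = \<phi> - \<phi> 1 \<le> 0\<close> on \<open>[0, 1]\<close>, and \<open>\<psi> 1 - \<psi> 0 = f 1 - f 0 - f' 1 + \<kappa> / 2\<close>.\<close>
  define \<psi> where "\<psi> t = f t - f' 1 * t - \<kappa> * (t - 1)\<^sup>2 / 2" for t
  have "(\<psi> has_real_derivative \<phi> t - \<phi> 1) (at t)" for t
    unfolding \<psi>_def \<phi>_def
    by (auto intro!: derivative_eq_intros f' simp: power2_eq_square field_simps)
  with MVT2[of 0 1 \<psi>] obtain \<xi> where "0 < \<xi>" "\<xi> < 1" "\<psi> 1 - \<psi> 0 = \<phi> \<xi> - \<phi> 1"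
    by force
  with \<phi>_le[of \<xi>] show ?thesis
    unfolding \<psi>_def by simp
qed

section \<open>Symmetry of the Hessian\<close>

lemma abs_inner_blinfun_le:
  fixes A :: "'a::real_inner \<Rightarrow>\<^sub>L 'a"
  shows "\<bar>A v \<bullet> u\<bar> \<le> norm A * norm v * norm u"
  by (meson Cauchy_Schwarz_ineq2 mult_right_mono norm_blinfun norm_ge_zero order_trans)

lemma second_difference_eq_hessian:
  fixes U :: "'a::real_inner \<Rightarrow> real"
  assumes grad: "\<And>p. (U has_derivative (\<lambda>h. G p \<bullet> h)) (at p)"
    and hess: "\<And>p. (G has_derivative blinfun_apply (H p)) (at p)"
    and h: "0 < h"
  obtains p where "norm (p - x) \<le> h * (norm u + norm v)"
    and "U (x + h *\<^sub>R u + h *\<^sub>R v) - U (x + h *\<^sub>R u) - U (x + h *\<^sub>R v) + U x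
           = h\<^sup>2 * (H p v \<bullet> u)"
proof -
  define k where "k s = U ((x + h *\<^sub>R v) + s *\<^sub>R u) - U (x + s *\<^sub>R u)" for s
  have "(k has_real_derivative G ((x + h *\<^sub>R v) + s *\<^sub>R u) \<bullet> u - G (x + s *\<^sub>R u) \<bullet> u) (at s)" for s
    unfolding k_def by (intro DERIV_diff has_real_derivative_along_line[OF grad])
  with MVT2[OF h, of k] obtain \<xi> where \<xi>: "0 < \<xi>" "\<xi> < h"
    and k_diff: "k h - k 0 = h * (G ((x + h *\<^sub>R v) + \<xi> *\<^sub>R u) \<bullet> u - G (x + \<xi> *\<^sub>R u) \<bullet> u)"
    by force
  define j where "j t = G ((x + \<xi> *\<^sub>R u) + t *\<^sub>R v) \<bullet> u" for t
  have "(j has_real_derivative H ((x + \<xi> *\<^sub>R u) + t *\<^sub>R v) v \<bullet> u) (at t)" for t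
    unfolding j_def by (rule inner_has_real_derivative_along_line[OF hess])
  with MVT2[OF h, of j] obtain \<eta> where \<eta>: "0 < \<eta>" "\<eta> < h"
    and j_diff: "j h - j 0 = h * (H ((x + \<xi> *\<^sub>R u) + \<eta> *\<^sub>R v) v \<bullet> u)"
    by force
  define p where "p = (x + \<xi> *\<^sub>R u) + \<eta> *\<^sub>R v"
  have "norm (p - x) \<le> \<xi> * norm u + \<eta> * norm v"
    unfolding p_def using norm_triangle_ineq[of "\<xi> *\<^sub>R u" "\<eta> *\<^sub>R v"] \<xi> \<eta> by simp
  also have "\<dots> \<le> h * (norm u + norm v)"
    using \<xi> \<eta> by (simp add: distrib_left add_mono mult_right_mono)
  finally have "norm (p - x) \<le> h * (norm u + norm v)" .
  moreover have "U (x + h *\<^sub>R u + h *\<^sub>R v) - U (x + h *\<^sub>R u) - U (x + h *\<^sub>R v) + U x = k h - k 0"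
    unfolding k_def by (simp add: algebra_simps)
  moreover have "G ((x + h *\<^sub>R v) + \<xi> *\<^sub>R u) \<bullet> u - G (x + \<xi> *\<^sub>R u) \<bullet> u = j h - j 0"
    unfolding j_def by (simp add: algebra_simps)
  ultimately show ?thesis
    using k_diff j_diff by (intro that[of p]) (simp_all add: p_def power2_eq_square)
qed

lemma hessian_values_eq_near:
  fixes U :: "'a::real_inner \<Rightarrow> real"
  assumes grad: "\<And>p. (U has_derivative (\<lambda>h. G p \<bullet> h)) (at p)"
    and hess: "\<And>p. (G has_derivative blinfun_apply (H p)) (at p)"
    and h: "0 < h"
  obtains p q where "norm (p - x) \<le> h * (norm u + norm v)" and "norm (q - x) \<le> h * (norm u + norm v)"
    and "H p v \<bullet> u = H q u \<bullet> v"
proof -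
  obtain p where p: "norm (p - x) \<le> h * (norm u + norm v)"
    "U (x + h *\<^sub>R u + h *\<^sub>R v) - U (x + h *\<^sub>R u) - U (x + h *\<^sub>R v) + U x = h\<^sup>2 * (H p v \<bullet> u)"
    using second_difference_eq_hessian[OF grad hess h] by blast
  obtain q where q: "norm (q - x) \<le> h * (norm v + norm u)"
    "U (x + h *\<^sub>R v + h *\<^sub>R u) - U (x + h *\<^sub>R v) - U (x + h *\<^sub>R u) + U x = h\<^sup>2 * (H q u \<bullet> v)"
    using second_difference_eq_hessian[OF grad hess h] by blast
  have "h\<^sup>2 * (H p v \<bullet> u) = h\<^sup>2 * (H q u \<bullet> v)"
    using p(2) q(2) by (simp add: algebra_simps)
  with h p(1) q(1) show ?thesis
    by (intro that[of p q]) (simp_all add: add.commute)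
qed

lemma hessian_symmetric:
  fixes U :: "'a::real_inner \<Rightarrow> real"
  assumes grad: "\<And>p. (U has_derivative (\<lambda>h. G p \<bullet> h)) (at p)"
    and hess: "\<And>p. (G has_derivative blinfun_apply (H p)) (at p)"
    and cont: "continuous_on UNIV H"
  shows "H x v \<bullet> u = H x u \<bullet> v"
proof -
  have "\<bar>H x v \<bullet> u - H x u \<bullet> v\<bar> \<le> 0 + e" if "0 < e" for e
  proof -
    define M where "M = norm u * norm v + 1"
    have M: "0 < M" "norm u * norm v \<le> M"
      by (auto simp: M_def add_nonneg_pos)
    define \<epsilon> where "\<epsilon> = e / (2 * M)"
    have "0 < \<epsilon>"
      using \<open>0 < e\<close> M by (simp add: \<epsilon>_def)
    then obtain d where d: "0 < d" "\<And>p. dist p x < d \<Longrightarrow> dist (H p) (H x) < \<epsilon>"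
      using cont unfolding continuous_on_iff by blast
    have near: "\<bar>H p w \<bullet> w' - H x w \<bullet> w'\<bar> \<le> \<epsilon> * (norm w * norm w')"
      if "norm (p - x) < d" for p w w'
    proof -
      have "\<bar>H p w \<bullet> w' - H x w \<bullet> w'\<bar> \<le> norm (H p - H x) * norm w * norm w'"
        using abs_inner_blinfun_le[of "H p - H x"] by (simp add: blinfun.diff_left inner_diff_left)
      also have "\<dots> \<le> \<epsilon> * (norm w * norm w')"
        using d(2)[of p] that unfolding dist_norm mult.assoc by (intro mult_right_mono) auto
      finally show ?thesis .
    qed
    define h where "h = d / (norm u + norm v + 1)"
    have N: "0 < norm u + norm v + 1"
      by (simp add: add_nonneg_pos)
    then have "0 < h"
      using d(1) by (simp add: h_def)
    have "h * (norm u + norm v) < h * (norm u + norm v + 1)"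
      using \<open>0 < h\<close> by simp
    also have "\<dots> = d"
      using N by (simp add: h_def)
    finally have "h * (norm u + norm v) < d" .
    with \<open>0 < h\<close> obtain p q where "norm (p - x) < d" "norm (q - x) < d" "H p v \<bullet> u = H q u \<bullet> v"
      using hessian_values_eq_near[OF grad hess, of h x u v] by (metis order.strict_trans1)
    then have "\<bar>H x v \<bullet> u - H x u \<bullet> v\<bar> \<le> 2 * \<epsilon> * (norm u * norm v)"
      using near[of p v u] near[of q u v] by (simp add: mult.commute)
    also have "\<dots> \<le> 2 * \<epsilon> * M"
      using M \<open>0 < \<epsilon>\<close> by (intro mult_left_mono) auto
    also have "\<dots> = e"
      using M by (simp add: \<epsilon>_def)
    finally show ?thesis by simp
  qed
  then show ?thesis
    using field_le_epsilon[of "\<bar>H x v \<bullet> u - H x u \<bullet> v\<bar>" 0] by simp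
qed

lemma quadratic_form_bounds_of_unit_bounds:
  fixes A :: "'a::real_inner \<Rightarrow>\<^sub>L 'a"
  assumes unit: "\<And>y. norm y = 1 \<Longrightarrow> lo \<le> A y \<bullet> y \<and> A y \<bullet> y \<le> up"
  shows "lo * (norm v)\<^sup>2 \<le> A v \<bullet> v \<and> A v \<bullet> v \<le> up * (norm v)\<^sup>2"
proof (cases "v = 0")
  case False
  define y where "y = (1 / norm v) *\<^sub>R v"
  have "norm y = 1" and v: "v = norm v *\<^sub>R y"
    using False by (auto simp: y_def)
  have "A v \<bullet> v = (A y \<bullet> y) * (norm v)\<^sup>2"
    by (subst (1 2) v) (simp add: blinfun.scaleR_right power2_eq_square)
  with unit[OF \<open>norm y = 1\<close>] show ?thesis
    by (auto intro: mult_right_mono)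
qed (simp add: blinfun.zero_right)

lemma abs_inner_blinfun_le_of_psd:
  fixes A :: "'a::real_inner \<Rightarrow>\<^sub>L 'a"
  assumes sym: "\<And>u v. A v \<bullet> u = A u \<bullet> v"
    and psd: "\<And>v. 0 \<le> A v \<bullet> v"
    and le: "\<And>v. A v \<bullet> v \<le> b * (norm v)\<^sup>2"
    and b: "0 \<le> b"
  shows "\<bar>A v \<bullet> w\<bar> \<le> b * norm v * norm w"
proof (cases "v = 0 \<or> w = 0")
  case False
  define v' w' where "v' = (1 / norm v) *\<^sub>R v" and "w' = (1 / norm w) *\<^sub>R w"
  have unit: "norm v' = 1" "norm w' = 1"
    using False by (auto simp: v'_def w'_def)
  have "norm (v' + w') \<le> 2" "norm (v' - w') \<le> 2"
    using norm_triangle_ineq[of v' w'] norm_triangle_ineq4[of v' w'] unit by auto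
  then have "(norm (v' + w'))\<^sup>2 \<le> 2\<^sup>2" "(norm (v' - w'))\<^sup>2 \<le> 2\<^sup>2"
    using power_mono[OF _ norm_ge_zero] by blast+
  then have "b * (norm (v' + w'))\<^sup>2 \<le> 4 * b" "b * (norm (v' - w'))\<^sup>2 \<le> 4 * b"
    using b by (auto dest: mult_left_mono[of _ _ b])
  moreover have "A (v' + w') \<bullet> (v' + w') - A (v' - w') \<bullet> (v' - w') = 4 * (A v' \<bullet> w')"
    using sym[of v' w']
    by (simp add: blinfun.add_right blinfun.diff_right inner_add_left inner_add_right
        inner_diff_left inner_diff_right)
  ultimately have "\<bar>A v' \<bullet> w'\<bar> \<le> b"
    using psd[of "v' + w'"] psd[of "v' - w'"] le[of "v' + w'"] le[of "v' - w'"] by linarith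
  moreover have "A v \<bullet> w = norm v * norm w * (A v' \<bullet> w')"
    using False by (simp add: v'_def w'_def blinfun.scaleR_right)
  ultimately show ?thesis
    using mult_left_mono[of "\<bar>A v' \<bullet> w'\<bar>" b "norm v * norm w"] by (simp add: abs_mult ac_simps)
qed (auto simp: blinfun.zero_right)

lemma quadratic_le_square_div:
  fixes \<alpha> c d :: real
  assumes "0 < \<alpha>"
  shows "- \<alpha> * d\<^sup>2 + c * d \<le> c\<^sup>2 / (4 * \<alpha>)"
proof -
  have "4 * \<alpha> * (- \<alpha> * d\<^sup>2 + c * d) = c\<^sup>2 - (2 * \<alpha> * d - c)\<^sup>2"
    by (simp add: power2_eq_square algebra_simps)
  then have "4 * \<alpha> * (- \<alpha> * d\<^sup>2 + c * d) \<le> c\<^sup>2"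
    by simp
  with assms show ?thesis
    by (simp add: le_divide_eq mult.commute)
qed

section \<open>Bounding \<open>\<tau>\<close> under two-sided Hessian bounds\<close>

lemma strongly_convex_segment_le:
  fixes U :: "'a::real_inner \<Rightarrow> real"
  assumes grad: "\<And>p. (U has_derivative (\<lambda>h. G p \<bullet> h)) (at p)"
    and hess: "\<And>p. (G has_derivative blinfun_apply (H p)) (at p)"
    and lower: "\<And>p v. p \<in> closed_segment x y \<Longrightarrow> a * (norm v)\<^sup>2 \<le> H p v \<bullet> v"
  shows "U y - U x - G y \<bullet> (y - x) \<le> - a * (norm (y - x))\<^sup>2 / 2"
proof -
  have "(\<lambda>t. U (x + t *\<^sub>R (y - x))) 1 - (\<lambda>t. U (x + t *\<^sub>R (y - x))) 0
      - (\<lambda>t. G (x + t *\<^sub>R (y - x)) \<bullet> (y - x)) 1 \<le> - (a * (norm (y - x))\<^sup>2) / 2"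
    by (rule taylor_remainder_le_of_second_derivative_ge[OF has_real_derivative_along_line[OF grad]
          inner_has_real_derivative_along_line[OF hess]])
      (auto intro: lower line_point_in_closed_segment)
  then show ?thesis
    by simp
qed

lemma gradient_increment_norm_le:
  fixes G :: "'a::real_inner \<Rightarrow> 'a"
  assumes hess: "\<And>p. (G has_derivative blinfun_apply (H p)) (at p)"
    and sym: "\<And>p u v. H p v \<bullet> u = H p u \<bullet> v"
    and bounds: "\<And>p v. p \<in> closed_segment x y \<Longrightarrow> 0 \<le> H p v \<bullet> v \<and> H p v \<bullet> v \<le> b * (norm v)\<^sup>2"
    and b: "0 \<le> b"
  shows "norm (G y - G x) \<le> b * norm (y - x)"
proof -
  define \<Delta> where "\<Delta> = G y - G x"
  define j where "j t = G (x + t *\<^sub>R (y - x)) \<bullet> \<Delta>" for t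
  have "(j has_real_derivative H (x + t *\<^sub>R (y - x)) (y - x) \<bullet> \<Delta>) (at t)" for t
    unfolding j_def by (rule inner_has_real_derivative_along_line[OF hess])
  with MVT2[of 0 1 j] obtain \<xi> where \<xi>: "0 < \<xi>" "\<xi> < 1"
    and j_diff: "j 1 - j 0 = H (x + \<xi> *\<^sub>R (y - x)) (y - x) \<bullet> \<Delta>"
    by force
  have "j 1 - j 0 = \<Delta> \<bullet> \<Delta>"
    unfolding j_def \<Delta>_def by (simp add: inner_diff_left)
  moreover have "\<bar>H (x + \<xi> *\<^sub>R (y - x)) (y - x) \<bullet> \<Delta>\<bar> \<le> b * norm (y - x) * norm \<Delta>"
    using \<xi> bounds[OF line_point_in_closed_segment] by (intro abs_inner_blinfun_le_of_psd sym b) auto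
  ultimately have "norm \<Delta> * norm \<Delta> \<le> b * norm (y - x) * norm \<Delta>"
    using j_diff by (simp flip: power2_eq_square add: power2_norm_eq_inner)
  then show ?thesis
    unfolding \<Delta>_def[symmetric] using b by (cases "\<Delta> = 0") auto
qed

lemma tau_eq:
  fixes U :: "'a::euclidean_space \<Rightarrow> real" and G :: "'a \<Rightarrow> 'a" and x z :: 'a
  assumes "0 \<le> \<gamma>"
  defines "y \<equiv> x - \<gamma> *\<^sub>R G x + sqrt (2 * \<gamma>) *\<^sub>R z"
  shows "tau U G \<gamma> x z = (U y - U x - G y \<bullet> (y - x))
    + sqrt (2 * \<gamma>) / 2 * ((G y - G x) \<bullet> z) + \<gamma> / 4 * (norm (G y - G x))\<^sup>2"
proof -
  define c where "c = sqrt (\<gamma> / 2)"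
  have s: "sqrt (2 * \<gamma>) = 2 * c"
    unfolding c_def using real_sqrt_mult[of 4 "\<gamma> / 2"] by simp
  have \<gamma>: "\<gamma> = 2 * c\<^sup>2"
    using assms unfolding c_def by simp
  have \<tau>: "tau U G \<gamma> x z = U y - U x + 1/2 * ((norm (z - c *\<^sub>R (G x + G y)))\<^sup>2 - (norm z)\<^sup>2)"
    unfolding tau_def Let_def y_def c_def by simp
  have yx: "y - x = (2 * c) *\<^sub>R z - (2 * c\<^sup>2) *\<^sub>R G x"
    unfolding y_def s using \<gamma> by simp
  have q: "\<gamma> / 4 = c\<^sup>2 / 2"
    using \<gamma> by simp
  show ?thesis
    unfolding \<tau> yx s q power2_norm_eq_inner
    by (simp add: inner_diff_left inner_diff_right inner_add_left inner_add_right inner_commute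
        power2_eq_square algebra_simps)
qed

lemma tau_le_quadratic_in_step:
  fixes U :: "'a::euclidean_space \<Rightarrow> real"
  assumes grad: "\<And>p. (U has_derivative (\<lambda>h. G p \<bullet> h)) (at p)"
    and hess: "\<And>p. (G has_derivative blinfun_apply (H p)) (at p)"
    and sym: "\<And>p u v. H p v \<bullet> u = H p u \<bullet> v"
    and \<gamma>: "0 \<le> \<gamma>" and a: "0 \<le> a" and b: "0 \<le> b"
    and bounds: "\<And>p v. p \<in> closed_segment x (x - \<gamma> *\<^sub>R G x + sqrt (2 * \<gamma>) *\<^sub>R z) \<Longrightarrow>
      a * (norm v)\<^sup>2 \<le> H p v \<bullet> v \<and> H p v \<bullet> v \<le> b * (norm v)\<^sup>2"
  defines "d \<equiv> norm (sqrt (2 * \<gamma>) *\<^sub>R z - \<gamma> *\<^sub>R G x)"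
  shows "tau U G \<gamma> x z \<le> - (a / 2 - \<gamma> * b\<^sup>2 / 4) * d\<^sup>2 + (sqrt (2 * \<gamma>) / 2 * b * norm z) * d"
proof -
  define s where "s = sqrt (2 * \<gamma>)"
  define y where "y = x - \<gamma> *\<^sub>R G x + s *\<^sub>R z"
  have d: "d = norm (y - x)"
    unfolding d_def y_def s_def by (simp add: algebra_simps)
  have convex: "U y - U x - G y \<bullet> (y - x) \<le> - a * d\<^sup>2 / 2"
    unfolding d using bounds by (intro strongly_convex_segment_le[OF grad hess]) (auto simp: y_def s_def)
  have "0 \<le> H p v \<bullet> v \<and> H p v \<bullet> v \<le> b * (norm v)\<^sup>2" if "p \<in> closed_segment x y" for p v
    using bounds[of p v] that a by (auto simp: y_def s_def intro: order_trans[rotated])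
  then have lipschitz: "norm (G y - G x) \<le> b * d"
    unfolding d by (rule gradient_increment_norm_le[OF hess sym _ b])
  have "(G y - G x) \<bullet> z \<le> b * d * norm z"
    using norm_cauchy_schwarz[of "G y - G x" z] lipschitz by (meson mult_right_mono norm_ge_zero order_trans)
  moreover have "(norm (G y - G x))\<^sup>2 \<le> (b * d)\<^sup>2"
    using lipschitz by (intro power_mono) auto
  moreover have "tau U G \<gamma> x z = (U y - U x - G y \<bullet> (y - x))
      + s / 2 * ((G y - G x) \<bullet> z) + \<gamma> / 4 * (norm (G y - G x))\<^sup>2"
    unfolding y_def s_def using \<gamma> by (rule tau_eq)
  ultimately have "tau U G \<gamma> x z \<le> - a * d\<^sup>2 / 2 + s / 2 * (b * d * norm z) + \<gamma> / 4 * (b * d)\<^sup>2"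
    using convex \<gamma> by (smt (verit) mult_left_mono real_sqrt_ge_zero s_def divide_nonneg_nonneg)
  then show ?thesis
    unfolding s_def by (simp add: power_mult_distrib algebra_simps)
qed

lemma tau_le_of_hessian_bounds:
  fixes U :: "'a::euclidean_space \<Rightarrow> real"
  assumes grad: "\<And>p. (U has_derivative (\<lambda>h. G p \<bullet> h)) (at p)"
    and hess: "\<And>p. (G has_derivative blinfun_apply (H p)) (at p)"
    and sym: "\<And>p u v. H p v \<bullet> u = H p u \<bullet> v"
    and \<gamma>: "0 < \<gamma>" and a: "0 < a" and b: "0 \<le> b"
    and ab: "b\<^sup>2 \<le> \<kappa> * a" and \<gamma>\<kappa>: "2 * \<gamma> * \<kappa> \<le> 1"
    and bounds: "\<And>p v. p \<in> closed_segment x (x - \<gamma> *\<^sub>R G x + sqrt (2 * \<gamma>) *\<^sub>R z) \<Longrightarrow>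
      a * (norm v)\<^sup>2 \<le> H p v \<bullet> v \<and> H p v \<bullet> v \<le> b * (norm v)\<^sup>2"
  shows "tau U G \<gamma> x z \<le> \<kappa> / 3 * \<gamma> * (norm z)\<^sup>2"
proof -
  have "2 * \<gamma> * b\<^sup>2 \<le> (2 * \<gamma> * \<kappa>) * a"
    using mult_left_mono[OF ab, of "2 * \<gamma>"] \<gamma> by (simp add: ac_simps)
  also have "\<dots> \<le> a"
    using \<gamma>\<kappa> a by (simp add: mult_left_le_one_le)
  finally have \<alpha>: "3 * a / 8 \<le> a / 2 - \<gamma> * b\<^sup>2 / 4"
    by simp
  define c where "c = sqrt (2 * \<gamma>) / 2 * b * norm z"
  have "tau U G \<gamma> x z \<le> - (a / 2 - \<gamma> * b\<^sup>2 / 4) * (norm (sqrt (2 * \<gamma>) *\<^sub>R z - \<gamma> *\<^sub>R G x))\<^sup>2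
      + c * norm (sqrt (2 * \<gamma>) *\<^sub>R z - \<gamma> *\<^sub>R G x)"
    unfolding c_def using \<gamma> a b bounds by (intro tau_le_quadratic_in_step[OF grad hess sym]) auto
  also have "\<dots> \<le> c\<^sup>2 / (4 * (a / 2 - \<gamma> * b\<^sup>2 / 4))"
    using \<alpha> a by (intro quadratic_le_square_div) simp
  also have "\<dots> = \<gamma> * b\<^sup>2 * (norm z)\<^sup>2 / (8 * (a / 2 - \<gamma> * b\<^sup>2 / 4))"
    using \<gamma> by (simp add: c_def power_mult_distrib power_divide)
  also have "\<dots> \<le> \<gamma> * b\<^sup>2 * (norm z)\<^sup>2 / (3 * a)"
    using \<alpha> a \<gamma> by (intro divide_left_mono) auto
  also have "\<dots> = \<gamma> * (norm z)\<^sup>2 / 3 * (b\<^sup>2 / a)"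
    by simp
  also have "\<dots> \<le> \<gamma> * (norm z)\<^sup>2 / 3 * \<kappa>"
    using ab a \<gamma> by (intro mult_left_mono) (auto simp: divide_le_eq)
  finally show ?thesis
    by (simp add: ac_simps)
qed

lemma rpow_nonneg: "0 \<le> rpow t e"
  unfolding rpow_def by auto

lemma rpow_mono:
  assumes "0 \<le> s" "s \<le> t" "0 \<le> e"
  shows "rpow s e \<le> rpow t e"
  using assms powr_mono2[of e s t] by (auto simp: rpow_def)

lemma rpow_of_nat_mult:
  assumes "0 \<le> t" "0 < n"
  shows "rpow t (real n * e) = rpow t e ^ n"
  using assms by (auto simp: rpow_def powr_powr mult.commute powr_realpow[symmetric])

lemma rpow_mult_le:
  assumes "1 \<le> c" "0 \<le> t" "0 \<le> e" "e \<le> 1"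
  shows "rpow (c * t) e \<le> c * rpow t e"
proof (cases "t = 0")
  case False
  have "c powr e \<le> c powr 1"
    using assms by (intro powr_mono) auto
  with assms False show ?thesis
    by (auto simp: rpow_def powr_mult)
qed (use assms in \<open>auto simp: rpow_def\<close>)

section \<open>Curvature ratio and the constant \<open>C\<^sub>2\<close>\<close>

lemma quartic_le_max_mult_cubic:
  fixes P :: real
  assumes "0 \<le> P"
  shows "1 + P ^ 4 \<le> max 1 P * (1 + P ^ 3)"
proof (cases "P \<le> 1")
  case True
  with assms have "P ^ 4 \<le> P ^ 3"
    by (simp add: power_decreasing)
  with True show ?thesis
    by simp
next
  case False
  then show ?thesis
    by (simp add: algebra_simps power_Suc[symmetric] del: power_Suc)
qed

lemma max_sq_mult_quartic_le:
  fixes P :: real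
  assumes P: "0 \<le> P"
  shows "(max 1 P)\<^sup>2 * (1 + 3 * P ^ 4) \<le> 8 * (1 + P ^ 3)\<^sup>2"
proof (cases "P \<le> 1")
  case True
  then have "1 + 3 * P ^ 4 \<le> 4"
    using P by (simp add: power_le_one)
  moreover have "1 \<le> (1 + P ^ 3)\<^sup>2"
    using P by (simp add: one_le_power)
  ultimately show ?thesis
    using True by simp
next
  case False
  then have "P\<^sup>2 * (1 + 3 * P ^ 4) \<le> P\<^sup>2 * (4 * P ^ 4)"
    by (intro mult_left_mono) (auto simp: one_le_power)
  also have "\<dots> = 4 * (P ^ 3)\<^sup>2"
    by (simp flip: power_add power_mult)
  also have "\<dots> \<le> 8 * (1 + P ^ 3)\<^sup>2"
  proof -
    have "(P ^ 3)\<^sup>2 \<le> (1 + P ^ 3)\<^sup>2"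
      using P by (intro power_mono) auto
    then show ?thesis
      using zero_le_power2[of "1 + P ^ 3"] by linarith
  qed
  finally show ?thesis
    using False by simp
qed

lemma quartic_cubic_ratio_bound:
  fixes m Lb P :: real
  assumes m: "0 < m" and P: "0 \<le> P" and rel: "m * (1 + P ^ 3) \<le> Lb * (1 + P ^ 4)"
  shows "m\<^sup>2 * (1 + 3 * P ^ 4) \<le> 8 * Lb\<^sup>2 * (1 + P ^ 3)\<^sup>2"
proof -
  have pos: "0 < 1 + P ^ 3" "0 < 1 + P ^ 4"
    using P by (simp_all add: add_pos_nonneg)
  with rel m have "0 < Lb"
    by (smt (verit) mult_pos_pos zero_less_mult_iff)
  then have "Lb * (1 + P ^ 4) \<le> Lb * (max 1 P * (1 + P ^ 3))"
    using quartic_le_max_mult_cubic[OF P] by (intro mult_left_mono) auto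
  with rel have "m * (1 + P ^ 3) \<le> (Lb * max 1 P) * (1 + P ^ 3)"
    by (simp add: mult.assoc)
  with pos have "m \<le> Lb * max 1 P"
    by simp
  with m have "m\<^sup>2 \<le> (Lb * max 1 P)\<^sup>2"
    by (intro power_mono) auto
  then have "m\<^sup>2 * (1 + 3 * P ^ 4) \<le> (Lb * max 1 P)\<^sup>2 * (1 + 3 * P ^ 4)"
    by (intro mult_right_mono) auto
  also have "\<dots> = Lb\<^sup>2 * ((max 1 P)\<^sup>2 * (1 + 3 * P ^ 4))"
    by (simp add: power_mult_distrib)
  also have "\<dots> \<le> 8 * Lb\<^sup>2 * (1 + P ^ 3)\<^sup>2"
    using mult_left_mono[OF max_sq_mult_quartic_le[OF P], of "Lb\<^sup>2"] by (simp add: ac_simps)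
  finally show ?thesis .
qed

lemma hessian_bound_ratio:
  fixes m Lb \<rho> \<beta> :: real
  assumes \<beta>: "0 \<le> \<beta>" "\<beta> \<le> 1" and \<rho>: "0 \<le> \<rho>" and m: "0 < m"
    and rel: "m / (1 + rpow \<rho> \<beta>) \<le> Lb / (1 + rpow \<rho> (3 * \<beta> / 4))"
  shows "(Lb / (1 + rpow \<rho> (3 * \<beta> / 4)))\<^sup>2 \<le> 8 * Lb ^ 4 / m ^ 3 * (m / (1 + rpow (3 * \<rho>) \<beta>))"
proof -
  define P where "P = rpow \<rho> (\<beta> / 4)"
  define R where "R = rpow (3 * \<rho>) \<beta>"
  have P: "0 \<le> P" "rpow \<rho> \<beta> = P ^ 4" "rpow \<rho> (3 * \<beta> / 4) = P ^ 3"
    using rpow_of_nat_mult[OF \<rho>, of 4 "\<beta> / 4"] rpow_of_nat_mult[OF \<rho>, of 3 "\<beta> / 4"]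
    by (simp_all add: P_def rpow_nonneg)
  have R: "0 \<le> R" "R \<le> 3 * P ^ 4"
    using rpow_mult_le[of 3 \<rho> \<beta>] \<beta> \<rho> P(2) by (simp_all add: R_def rpow_nonneg)
  define B Q where "B = 1 + P ^ 3" and "Q = 1 + R"
  have pos: "0 < B" "0 < 1 + P ^ 4" "0 < Q"
    using P(1) R(1) by (simp_all add: B_def Q_def add_pos_nonneg)
  have "m * (1 + P ^ 3) \<le> Lb * (1 + P ^ 4)"
    using rel pos unfolding P B_def by (simp add: divide_simps mult.commute)
  then have "m\<^sup>2 * (1 + 3 * P ^ 4) \<le> 8 * Lb\<^sup>2 * (1 + P ^ 3)\<^sup>2"
    using quartic_cubic_ratio_bound m P(1) by blast
  then have key: "m\<^sup>2 * Q \<le> 8 * Lb\<^sup>2 * B\<^sup>2"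
    using R m unfolding B_def Q_def by (smt (verit) mult_left_mono zero_le_power2)
  have "(Lb / (1 + rpow \<rho> (3 * \<beta> / 4)))\<^sup>2 = Lb\<^sup>2 * (m\<^sup>2 * Q) / (m\<^sup>2 * Q * B\<^sup>2)"
    using pos m unfolding P(3) B_def[symmetric] by (simp add: power_divide)
  also have "\<dots> \<le> Lb\<^sup>2 * (8 * Lb\<^sup>2 * B\<^sup>2) / (m\<^sup>2 * Q * B\<^sup>2)"
    using key pos m by (intro divide_right_mono mult_left_mono) auto
  also have "\<dots> = 8 * Lb ^ 4 / m ^ 3 * (m / (1 + rpow (3 * \<rho>) \<beta>))"
    using pos m unfolding R_def[symmetric] Q_def[symmetric]
    by (simp add: field_simps power2_eq_square power3_eq_cube power4_eq_xxxx)
  finally show ?thesis .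
qed

lemma C2_const_ge:
  fixes L m Lb \<gamma>bar :: real
  assumes m: "0 < m" and Lb: "0 < Lb" and L: "0 \<le> L" and \<gamma>bar: "0 \<le> \<gamma>bar"
  shows "128 * Lb ^ 4 / m ^ 3 \<le> C2_const L m Lb \<gamma>bar"
proof -
  define D where "D = 2 powr (3/2) * Lb\<^sup>2 + 2 powr (-1/2) * sqrt \<gamma>bar * Lb ^ 3"
  have D: "2 powr (3/2) * Lb\<^sup>2 \<le> D"
    unfolding D_def using Lb \<gamma>bar by simp
  then have "0 < D"
    using Lb by (smt (verit) powr_gt_zero zero_less_power mult_pos_pos)
  have \<epsilon>: "eps_const m Lb \<gamma>bar = (m ^ 3 / 16) / D"
    unfolding eps_const_def D_def by simp
  have "2 powr (3/2) * 2 powr (3/2) = (8::real)"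
    by (simp flip: powr_add)
  then have "128 * Lb ^ 4 = 16 * (2 powr (3/2) * Lb\<^sup>2) * (2 powr (3/2) * Lb\<^sup>2)"
    by (simp add: power2_eq_square power4_eq_xxxx algebra_simps)
  also have "\<dots> \<le> 16 * (2 powr (3/2) * Lb\<^sup>2) * D"
    using D by (intro mult_left_mono) auto
  finally have "128 * Lb ^ 4 / m ^ 3 \<le> 2 powr (3/2) * Lb\<^sup>2 / eps_const m Lb \<gamma>bar"
    using m \<open>0 < D\<close> unfolding \<epsilon> by (simp add: divide_simps mult.commute)
  also have "\<dots> \<le> C2_const L m Lb \<gamma>bar"
  proof -
    have "0 \<le> 2 powr (-1/2) * \<gamma>bar powr (3/2) * Lb ^ 3 / eps_const m Lb \<gamma>bar"
      using m Lb \<open>0 < D\<close> unfolding \<epsilon> by simp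
    moreover have "0 \<le> \<gamma>bar / 2 * L\<^sup>2"
      using \<gamma>bar by simp
    ultimately show ?thesis
      using L unfolding C2_const_def Let_def by linarith
  qed
  finally show ?thesis .
qed


lemma gradient_norm_le:
  fixes G :: "'a::real_normed_vector \<Rightarrow> 'a"
  assumes hess: "\<And>p. (G has_derivative blinfun_apply (H p)) (at p)"
    and "G 0 = 0" and "\<And>p. norm (H p) \<le> L"
  shows "norm (G x) \<le> L * norm x"
  using differentiable_bound[of UNIV G "\<lambda>p. blinfun_apply (H p)" L x 0] assms
  by (simp add: norm_blinfun.rep_eq)

lemma step_norm_le:
  fixes x g z :: "'a::real_normed_vector"
  assumes \<gamma>: "0 < \<gamma>" and g: "norm g \<le> L * norm x" and \<gamma>L: "\<gamma> * L \<le> 1 / 4"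
    and z: "norm z \<le> norm x / (4 * sqrt (2 * \<gamma>))"
  shows "norm ((x - \<gamma> *\<^sub>R g + sqrt (2 * \<gamma>) *\<^sub>R z) - x) \<le> norm x / 2"
proof -
  have "\<gamma> * norm g \<le> (\<gamma> * L) * norm x"
    using g \<gamma> by (simp add: mult.assoc mult_left_mono)
  also have "\<dots> \<le> norm x / 4"
    using mult_right_mono[OF \<gamma>L norm_ge_zero[of x]] by simp
  finally have "\<gamma> * norm g \<le> norm x / 4" .
  moreover have "sqrt (2 * \<gamma>) * norm z \<le> norm x / 4"
    using z \<gamma> by (simp add: field_simps)
  ultimately show ?thesis
    using norm_triangle_ineq4[of "sqrt (2 * \<gamma>) *\<^sub>R z" "\<gamma> *\<^sub>R g"] \<gamma> by simp
qed

lemma norm_in_closed_segment_bounds: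
  fixes p x y :: "'a::real_normed_vector"
  assumes "p \<in> closed_segment x y"
  shows "norm x - norm (y - x) \<le> norm p \<and> norm p \<le> norm x + norm (y - x)"
  using segment_bound1[OF assms] norm_triangle_ineq2[of x p] norm_triangle_ineq2[of p x]
  by (simp add: norm_minus_commute)

lemma hessian_bounds_on_annulus:
  fixes H :: "'a::real_inner \<Rightarrow> 'a \<Rightarrow>\<^sub>L 'a"
  assumes curv: "\<And>x y. norm x \<ge> K \<Longrightarrow> norm y = 1 \<Longrightarrow>
      Lb / (1 + rpow (norm x) (3 * \<beta> / 4)) \<ge> H x y \<bullet> y \<and> H x y \<bullet> y \<ge> m / (1 + rpow (norm x) \<beta>)"
    and \<beta>: "0 \<le> \<beta>" and m: "0 < m" and Lb: "0 \<le> Lb"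
    and \<rho>: "K \<le> \<rho>" "0 \<le> \<rho>" and p: "\<rho> \<le> norm p" "norm p \<le> 3 * \<rho>"
  shows "m / (1 + rpow (3 * \<rho>) \<beta>) * (norm v)\<^sup>2 \<le> H p v \<bullet> v
    \<and> H p v \<bullet> v \<le> Lb / (1 + rpow \<rho> (3 * \<beta> / 4)) * (norm v)\<^sup>2"
proof -
  have "m / (1 + rpow (norm p) \<beta>) * (norm v)\<^sup>2 \<le> H p v \<bullet> v
      \<and> H p v \<bullet> v \<le> Lb / (1 + rpow (norm p) (3 * \<beta> / 4)) * (norm v)\<^sup>2"
    using \<rho> p curv by (intro quadratic_form_bounds_of_unit_bounds) auto
  moreover have "m / (1 + rpow (3 * \<rho>) \<beta>) \<le> m / (1 + rpow (norm p) \<beta>)"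
    using m \<beta> \<rho> p rpow_nonneg[of "norm p" \<beta>] rpow_mono[of "norm p" "3 * \<rho>" \<beta>]
    by (intro divide_left_mono) (auto simp: add_pos_nonneg)
  moreover have "Lb / (1 + rpow (norm p) (3 * \<beta> / 4)) \<le> Lb / (1 + rpow \<rho> (3 * \<beta> / 4))"
    using Lb \<beta> \<rho> p rpow_nonneg[of \<rho> "3 * \<beta> / 4"] rpow_mono[of \<rho> "norm p" "3 * \<beta> / 4"]
    by (intro divide_left_mono) (auto simp: add_pos_nonneg)
  ultimately show ?thesis
    by (meson mult_right_mono order_trans zero_le_power2)
qed

lemma tau_le_of_curvature_bounds:
  fixes U :: "'a::euclidean_space \<Rightarrow> real" and H :: "'a \<Rightarrow> 'a \<Rightarrow>\<^sub>L 'a"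
  assumes grad: "\<And>p. (U has_derivative (\<lambda>h. G p \<bullet> h)) (at p)"
    and hess: "\<And>p. (G has_derivative blinfun_apply (H p)) (at p)"
    and sym: "\<And>p u v. H p v \<bullet> u = H p u \<bullet> v"
    and grad0: "G 0 = 0" and hess_bound: "\<And>p. norm (H p) \<le> L"
    and curv: "\<And>x y. norm x \<ge> K \<Longrightarrow> norm y = 1 \<Longrightarrow>
      Lb / (1 + rpow (norm x) (3 * \<beta> / 4)) \<ge> H x y \<bullet> y \<and> H x y \<bullet> y \<ge> m / (1 + rpow (norm x) \<beta>)"
    and \<beta>: "0 \<le> \<beta>" "\<beta> \<le> 1" and m: "0 < m"
    and \<gamma>: "0 < \<gamma>" "\<gamma> * L \<le> 1 / 4" "\<gamma> \<le> m ^ 3 / (16 * Lb ^ 4)"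
    and x: "2 * K \<le> norm x" and z: "norm z \<le> norm x / (4 * sqrt (2 * \<gamma>))"
  shows "tau U G \<gamma> x z \<le> 8 * Lb ^ 4 / (3 * m ^ 3) * \<gamma> * (norm z)\<^sup>2"
proof -
  define \<rho> a b \<kappa> where "\<rho> = norm x / 2" and "a = m / (1 + rpow (3 * \<rho>) \<beta>)"
    and "b = Lb / (1 + rpow \<rho> (3 * \<beta> / 4))" and "\<kappa> = 8 * Lb ^ 4 / m ^ 3"
  have \<rho>: "K \<le> \<rho>" "0 \<le> \<rho>"
    using x by (auto simp: \<rho>_def)
  obtain e :: 'a where "norm e = 1"
    using norm_Basis SOME_Basis by blast
  then have rel: "m / (1 + rpow \<rho> \<beta>) \<le> Lb / (1 + rpow \<rho> (3 * \<beta> / 4))"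
    using curv[of "\<rho> *\<^sub>R e" e] \<rho> by auto
  then have "0 < Lb"
    using m rpow_nonneg[of \<rho>] by (smt (verit) divide_nonpos_nonneg divide_pos_pos)
  have ratio: "b\<^sup>2 \<le> \<kappa> * a"
    unfolding a_def b_def \<kappa>_def using rel \<beta> \<rho>(2) m by (intro hessian_bound_ratio) auto
  have "2 * \<gamma> * \<kappa> \<le> 1"
    using \<gamma>(3) m \<open>0 < Lb\<close> by (simp add: \<kappa>_def le_divide_eq divide_le_eq mult.commute)
  have step: "norm ((x - \<gamma> *\<^sub>R G x + sqrt (2 * \<gamma>) *\<^sub>R z) - x) \<le> norm x / 2"
    by (rule step_norm_le[OF \<gamma>(1) gradient_norm_le[OF hess grad0 hess_bound] \<gamma>(2) z])
  have "tau U G \<gamma> x z \<le> \<kappa> / 3 * \<gamma> * (norm z)\<^sup>2"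
  proof (rule tau_le_of_hessian_bounds[OF grad hess sym \<gamma>(1) _ _ ratio \<open>2 * \<gamma> * \<kappa> \<le> 1\<close>])
    show "0 < a" "0 \<le> b"
      using m \<open>0 < Lb\<close> rpow_nonneg by (auto simp: a_def b_def add_pos_nonneg)
    fix p v
    assume "p \<in> closed_segment x (x - \<gamma> *\<^sub>R G x + sqrt (2 * \<gamma>) *\<^sub>R z)"
    with step have "\<rho> \<le> norm p" "norm p \<le> 3 * \<rho>"
      using norm_in_closed_segment_bounds by (fastforce simp: \<rho>_def)+
    then show "a * (norm v)\<^sup>2 \<le> H p v \<bullet> v \<and> H p v \<bullet> v \<le> b * (norm v)\<^sup>2"
      unfolding a_def b_def using hessian_bounds_on_annulus[OF curv \<beta>(1) m _ \<rho>] \<open>0 < Lb\<close>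
      by fastforce
  qed
  then show ?thesis
    by (simp add: \<kappa>_def)
qed

theorem lemma6:
  fixes U :: "'a::euclidean_space \<Rightarrow> real"
    and G :: "'a \<Rightarrow> 'a"
    and H :: "'a \<Rightarrow> 'a \<Rightarrow>\<^sub>L 'a"
    and \<beta> L m\<^sub>\<beta> L\<^sub>\<beta> K\<^sub>\<beta> \<gamma>bar :: real
  assumes beta: "0 \<le> \<beta>" "\<beta> < 1"
    and grad: "\<And>x. (U has_derivative (\<lambda>h. G x \<bullet> h)) (at x)"
    and hess: "\<And>x. (G has_derivative blinfun_apply (H x)) (at x)"
    and hess_cont: "continuous_on UNIV H"
    and grad0: "G 0 = 0"
    and hess_bound: "\<And>x. norm (H x) \<le> L"
    and m_pos: "m\<^sub>\<beta> > 0" and Lb_nonneg: "L\<^sub>\<beta> \<ge> 0" and Kb_nonneg: "K\<^sub>\<beta> \<ge> 0"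
    and curv: "\<And>x y. norm x \<ge> K\<^sub>\<beta> \<Longrightarrow> norm y = 1 \<Longrightarrow>
         L\<^sub>\<beta> / (1 + rpow (norm x) (3 * \<beta> / 4)) \<ge> H x y \<bullet> y \<and>
         H x y \<bullet> y \<ge> m\<^sub>\<beta> / (1 + rpow (norm x) \<beta>)"
    and gbar: "\<gamma>bar \<le> min (1 / (4 * L)) (m\<^sub>\<beta> ^ 3 / (2 ^ 4 * L\<^sub>\<beta> ^ 4))"
  shows "\<forall>\<gamma> x z. 0 < \<gamma> \<and> \<gamma> \<le> \<gamma>bar \<and>
      norm x \<ge> Max {2 * K\<^sub>\<beta>,
                     max (4 * K\<^sub>\<beta> * (1 + L / m\<^sub>\<beta>)) (rpow (4 * K\<^sub>\<beta> * (1 + L / m\<^sub>\<beta>)) (1 / (1 - \<beta>))),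
                     max (2 * L * K\<^sub>\<beta> / L\<^sub>\<beta>) (rpow (2 * L * K\<^sub>\<beta> / L\<^sub>\<beta>) (1 / (1 - 3 * \<beta> / 4)))} \<and>
      norm z \<le> norm x / (4 * sqrt (2 * \<gamma>))
      \<longrightarrow> tau U G \<gamma> x z \<le> C2_const L m\<^sub>\<beta> L\<^sub>\<beta> \<gamma>bar * \<gamma> * (norm z)\<^sup>2"
proof (intro allI impI)
  fix \<gamma> :: real and x z :: 'a
  assume "0 < \<gamma> \<and> \<gamma> \<le> \<gamma>bar \<and>
      norm x \<ge> Max {2 * K\<^sub>\<beta>,
                     max (4 * K\<^sub>\<beta> * (1 + L / m\<^sub>\<beta>)) (rpow (4 * K\<^sub>\<beta> * (1 + L / m\<^sub>\<beta>)) (1 / (1 - \<beta>))),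
                     max (2 * L * K\<^sub>\<beta> / L\<^sub>\<beta>) (rpow (2 * L * K\<^sub>\<beta> / L\<^sub>\<beta>) (1 / (1 - 3 * \<beta> / 4)))} \<and>
      norm z \<le> norm x / (4 * sqrt (2 * \<gamma>))"
  then have \<gamma>: "0 < \<gamma>" "\<gamma> \<le> \<gamma>bar" and x: "2 * K\<^sub>\<beta> \<le> norm x"
    and z: "norm z \<le> norm x / (4 * sqrt (2 * \<gamma>))"
    by auto
  have \<gamma>L: "\<gamma> \<le> 1 / (4 * L)" and \<gamma>m: "\<gamma> \<le> m\<^sub>\<beta> ^ 3 / (16 * L\<^sub>\<beta> ^ 4)"
    using gbar \<gamma> by auto
  then have "0 < L"
    using \<gamma> by (smt (verit) zero_less_divide_iff)
  have "0 < L\<^sub>\<beta>"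
    using \<gamma>m \<gamma> Lb_nonneg by (cases "L\<^sub>\<beta> = 0") auto
  have "tau U G \<gamma> x z \<le> 8 * L\<^sub>\<beta> ^ 4 / (3 * m\<^sub>\<beta> ^ 3) * \<gamma> * (norm z)\<^sup>2"
    using \<gamma>L \<open>0 < L\<close> beta
    by (intro tau_le_of_curvature_bounds[OF grad hess hessian_symmetric[OF grad hess hess_cont]
          grad0 hess_bound curv _ _ m_pos \<gamma>(1) _ \<gamma>m x z]) (auto simp: le_divide_eq)
  also have "\<dots> \<le> C2_const L m\<^sub>\<beta> L\<^sub>\<beta> \<gamma>bar * \<gamma> * (norm z)\<^sup>2"
  proof (intro mult_right_mono)
    have "8 * L\<^sub>\<beta> ^ 4 / (3 * m\<^sub>\<beta> ^ 3) \<le> 128 * L\<^sub>\<beta> ^ 4 / m\<^sub>\<beta> ^ 3"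
      using m_pos by (simp add: field_simps)
    also have "\<dots> \<le> C2_const L m\<^sub>\<beta> L\<^sub>\<beta> \<gamma>bar"
      using m_pos \<open>0 < L\<^sub>\<beta>\<close> \<open>0 < L\<close> \<gamma> by (intro C2_const_ge) auto
    finally show "8 * L\<^sub>\<beta> ^ 4 / (3 * m\<^sub>\<beta> ^ 3) \<le> C2_const L m\<^sub>\<beta> L\<^sub>\<beta> \<gamma>bar" .
  qed (use \<gamma> in auto)
  finally show "tau U G \<gamma> x z \<le> C2_const L m\<^sub>\<beta> L\<^sub>\<beta> \<gamma>bar * \<gamma> * (norm z)\<^sup>2" .
qed

end
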